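(* For a coloured integer $k_x$ and $u,v,n\in\mathbb{N}$, let $d_{k_x}(u,v,n)$ be the number of admissible coloured partitions of size $n$ and weights $u$, $v$ whose largest part $\lambda_1$ satisfies $\lambda_1\le k_x$ in the total order of coloured integers (the empty partition is counted, with $n=u=v=0$), and set $d_{k_x}(u,v,n)=0$ whenever one of $u,v,n$ is negative. Then for all $u,v \in \mathbb{N}$ and all integers $k,n \geq 1$: \begin{align*} d_{(2k+1)_{ab}}(u,v,n)&=d_{(2k)_{b}}(u,v,n)+d_{(2k-1)_{a}}(u-1,v-1,n-2k-1),\\ d_{(2k+1)_{a}}(u,v,n)&=d_{(2k+1)_{ab}}(u,v,n)+d_{(2k)_{ab}}(u-1,v,n-2k-1),\\ d_{(2k+1)_{b^2}}(u,v,n)&=d_{(2k+1)_{a}}(u,v,n)+d_{(2k-1)_{a}}(u,v-2,n-2k-1),\\ d_{(2k+1)_{b}}(u,v,n)&=d_{(2k+1)_{b^2}}(u,v,n)+d_{(2k)_{a}}(u,v-1,n-2k-1),\\ d_{(2k+2)_{ab}}(u,v,n)&= d_{(2k+1)_{b}}(u,v,n)+d_{(2k)_{a}}(u-1,v-1,n-2k-2)+d_{(2k-1)_{a}}(u-1,v-2,n-4k-2),\\ d_{(2k+2)_{a}}(u,v,n)&= d_{(2k+2)_{ab}}(u,v,n)+d_{(2k)_{a}}(u-1,v,n-2k-2)+d_{(2k-1)_{a}}(u-1,v-1,n-4k-2),\\ d_{(2k+3)_{a^2}}(u,v,n)&= d_{(2k+2)_{a}}(u,v,n)+d_{(2k)_{a}}(u-2,v,n-2k-3)+d_{(2k-1)_{a}}(u-2,v-1,n-4k-3),\\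 d_{(2k+2)_{b}}(u,v,n)&=d_{(2k+3)_{a^2}}(u,v,n)+d_{(2k+1)_{a}}(u,v-1,n-2k-2). \end{align*}
   Context: Coloured integers: every positive integer $k$ occurs in the three colours $a$, $b$, $ab$ (written $k_a$, $k_b$, $k_{ab}$). In addition, odd positive integers occur in the colours $a^2$ and $b^2$: $k_{b^2}$ for every odd $k\ge 1$ and $k_{a^2}$ for every odd $k \geq 3$. The integer value of $k_x$ is $k$ and its colour is $x$. These coloured integers are totally ordered by $$1_{ab} < 1_a < 1_{b^2} <1_{b} <2_{ab} < 2_a <3_{a^2} < 2_{b} <3_{ab} < 3_a < 3_{b^2} <3_b <4_{ab}<4_a<5_{a^2}<4_b<5_{ab}<\cdots,$$ that is, for every odd $m\ge1$: $m_{ab}<m_a<m_{b^2}<m_b<(m+1)_{ab}<(m+1)_a<(m+2)_{a^2}<(m+1)_b<(m+2)_{ab}$. Difference conditions: for a coloured integer $\lambda$ (the "upper" part) of colour $x$ and a coloured integer $\mu$ (the "lower" part) of colour $y$, a minimal difference $A(\lambda,\mu)$ is defined as follows, where the row is determined by the colour and the parity of the integer value of $\lambda$, and the entries are listed for $y = a, b, ab, a^2, b^2$ in this order: - $\lambda$ of colour $a$, odd: $2,2,1,2,2$; - $\lambda$ of colour $b^2$: $2,3,2,2,4$; - $\lambda$ of colour $b$, odd: $1,2,1,2,2$; - $\lambda$ of colour $ab$, even: $2,2,2,3,3$; - $\lambda$ of colour $a$, even: $2,2,2,3,3$; - $\lambda$ of colour $a^2$: $3,3,3,4,4$; - $\lambda$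 of colour $b$, even: $1,2,1,1,3$; - $\lambda$ of colour $ab$, odd: $2,3,2,2,3$. An admissible coloured partition is a finite (possibly empty) sequence $\lambda_1,\dots,\lambda_s$ of coloured integers, none of which equals $1_{ab}$ or $1_{b^2}$, such that for every $1\le i<s$ the integer values satisfy $\lambda_i-\lambda_{i+1}\ge A(\lambda_i,\lambda_{i+1})$. Its size $n$ is the sum of the integer values of its parts. Its weight $u$ is the number of parts of colour $a$ or $ab$ plus twice the number of parts of colour $a^2$; its weight $v$ is the number of parts of colour $b$ or $ab$ plus twice the number of parts of colour $b^2$. *)

theory Defs
  imports Main
begin

datatype colour = Ca | Cb | Cab | Ca2 | Cb2

type_synonym cint = "nat \<times> colour"

definition valid_cint :: "cint \<Rightarrow> bool" where
  "valid_cint p \<longleftrightarrow> (let k = fst p; c = snd p in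
     k \<ge> 1 \<and> (c = Ca2 \<longrightarrow> odd k \<and> k \<ge> 3) \<and> (c = Cb2 \<longrightarrow> odd k))"

text \<open>Position of a coloured integer in the total order
  1_ab < 1_a < 1_b2 < 1_b < 2_ab < 2_a < 3_a2 < 2_b < 3_ab < ...
  (blocks of eight: for odd m, m_ab, m_a, m_b2, m_b, (m+1)_ab, (m+1)_a, (m+2)_a2, (m+1)_b).\<close>
fun crank :: "cint \<Rightarrow> nat" where
  "crank (k, Cab) = (if odd k then 8 * ((k - 1) div 2) else 8 * ((k - 2) div 2) + 4)"
| "crank (k, Ca) = (if odd k then 8 * ((k - 1) div 2) + 1 else 8 * ((k - 2) div 2) + 5)"
| "crank (k, Cb2) = 8 * ((k - 1) div 2) + 2"
| "crank (k, Cb) = (if odd k then 8 * ((k - 1) div 2) + 3 else 8 * ((k - 2) div 2) + 7)"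
| "crank (k, Ca2) = 8 * ((k - 3) div 2) + 6"

definition cle :: "cint \<Rightarrow> cint \<Rightarrow> bool" where
  "cle p q \<longleftrightarrow> crank p \<le> crank q"

text \<open>Entries of a row, for lower colour y = a, b, ab, a2, b2 in this order.\<close>
fun row :: "nat \<Rightarrow> nat \<Rightarrow> nat \<Rightarrow> nat \<Rightarrow> nat \<Rightarrow> colour \<Rightarrow> nat" where
  "row xa xb xab xa2 xb2 Ca = xa"
| "row xa xb xab xa2 xb2 Cb = xb"
| "row xa xb xab xa2 xb2 Cab = xab"
| "row xa xb xab xa2 xb2 Ca2 = xa2"
| "row xa xb xab xa2 xb2 Cb2 = xb2"

definition mindiff :: "cint \<Rightarrow> cint \<Rightarrow> nat" where
  "mindiff lam mu = (let k = fst lam; x = snd lam; y = snd mu in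
     (case x of
        Ca \<Rightarrow> if odd k then row 2 2 1 2 2 y else row 2 2 2 3 3 y
      | Cb2 \<Rightarrow> row 2 3 2 2 4 y
      | Cb \<Rightarrow> if odd k then row 1 2 1 2 2 y else row 1 2 1 1 3 y
      | Cab \<Rightarrow> if odd k then row 2 3 2 2 3 y else row 2 2 2 3 3 y
      | Ca2 \<Rightarrow> row 3 3 3 4 4 y))"

definition admissible :: "cint list \<Rightarrow> bool" where
  "admissible ps \<longleftrightarrow>
     (\<forall>p\<in>set ps. valid_cint p \<and> p \<noteq> (1, Cab) \<and> p \<noteq> (1, Cb2)) \<and>
     (\<forall>i. Suc i < length ps \<longrightarrow>
        int (fst (ps ! i)) - int (fst (ps ! Suc i)) \<ge> int (mindiff (ps ! i) (ps ! Suc i)))"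

definition psize :: "cint list \<Rightarrow> nat" where
  "psize ps = (\<Sum>p\<leftarrow>ps. fst p)"

definition weight_u :: "cint list \<Rightarrow> nat" where
  "weight_u ps = length (filter (\<lambda>p. snd p = Ca \<or> snd p = Cab) ps)
                 + 2 * length (filter (\<lambda>p. snd p = Ca2) ps)"

definition weight_v :: "cint list \<Rightarrow> nat" where
  "weight_v ps = length (filter (\<lambda>p. snd p = Cb \<or> snd p = Cab) ps)
                 + 2 * length (filter (\<lambda>p. snd p = Cb2) ps)"

text \<open>d_{k_x}(u,v,n); zero if any argument is negative. The largest part is the head.\<close>
definition dcount :: "cint \<Rightarrow> int \<Rightarrow> int \<Rightarrow> int \<Rightarrow> nat" where
  "dcount kx u v n = (if u < 0 \<or> v < 0 \<or> n < 0 then 0 else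
     card {ps. admissible ps \<and> int (psize ps) = n \<and> int (weight_u ps) = u
              \<and> int (weight_v ps) = v \<and> (ps = [] \<or> cle (hd ps) kx)})"

end

theory Submission
  imports Defs
begin

text \<open>Split the partitions counted by \<open>d\<^sub>K\<close> according to whether the largest part equals \<open>K\<close>.
  Those with a smaller largest part are counted by \<open>d\<^sub>K'\<close>, \<open>K'\<close> the immediate predecessor
  of \<open>K\<close> among admissible parts. Removing the largest part \<open>K\<close> leaves the partitions whose
  largest part may follow \<open>K\<close>; a table check shows that these are exactly the partitions with
  largest part at most some \<open>L\<close>, or, for \<open>K\<close> one of \<open>(2k+2)\<^sub>a\<^sub>b\<close>, \<open>(2k+2)\<^sub>a\<close>, \<open>(2k+3)\<^sub>a\<^sub>2\<close>,
  additionally those with largest part \<open>(2k)\<^sub>b\<close>, which is peeled off in the same way.\<close>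

definition allowed_part :: "cint \<Rightarrow> bool" where
  "allowed_part p \<longleftrightarrow> valid_cint p \<and> p \<noteq> (1, Cab) \<and> p \<noteq> (1, Cb2)"

definition may_follow :: "cint \<Rightarrow> cint \<Rightarrow> bool" where
  "may_follow p q \<longleftrightarrow> fst q + mindiff p q \<le> fst p"

lemma successively_iff_nth:
  "successively P xs \<longleftrightarrow> (\<forall>i. Suc i < length xs \<longrightarrow> P (xs ! i) (xs ! Suc i))"
  by (induction P xs rule: successively.induct) (auto simp: nth_Cons split: nat.splits)

lemma admissible_iff:
  "admissible ps \<longleftrightarrow> (\<forall>p\<in>set ps. allowed_part p) \<and> successively may_follow ps"
  unfolding admissible_def allowed_part_def may_follow_def successively_iff_nth by auto

lemma admissible_Cons:
  "admissible (p # qs) \<longleftrightarrow> allowed_part p \<and> admissible qs \<and> (qs = [] \<or> may_follow p (hd qs))"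
  unfolding admissible_iff successively_Cons by auto

fun colour_offset :: "colour \<Rightarrow> nat" where
  "colour_offset Cab = 4" | "colour_offset Ca = 3" | "colour_offset Cb2 = 2"
| "colour_offset Cb = 1" | "colour_offset Ca2 = 6"

lemma crank_eq:
  assumes "valid_cint (k, c)"
  shows "crank (k, c) = 4 * k - colour_offset c"
proof -
  have half: "(2 * b - 2) div 2 = b - 1" "(Suc (2 * b) - 3) div 2 = b - 1" for b :: nat
    by presburger+
  show ?thesis
    using assms by (cases c; cases "even k") (auto simp: valid_cint_def half elim!: evenE oddE)
qed

lemma colour_offset_le: "valid_cint (k, c) \<Longrightarrow> colour_offset c \<le> 4 * k"
  by (cases c) (simp_all add: valid_cint_def)

lemma crank_inj:
  assumes "valid_cint p" "valid_cint q" "crank p = crank q"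
  shows "p = q"
proof -
  obtain i c j d where pq: "p = (i, c)" "q = (j, d)" by fastforce
  have valid: "valid_cint (i, c)" "valid_cint (j, d)"
    using assms(1,2) unfolding pq .
  then have "4 * i - colour_offset c = 4 * j - colour_offset d"
    using assms(3) unfolding pq by (simp add: crank_eq)
  moreover have "c = Ca2 \<longrightarrow> odd i \<and> i \<ge> 3" "c = Cb2 \<longrightarrow> odd i"
    "d = Ca2 \<longrightarrow> odd j \<and> j \<ge> 3" "d = Cb2 \<longrightarrow> odd j" "i \<ge> 1" "j \<ge> 1"
    using valid by (simp_all add: valid_cint_def)
  ultimately show ?thesis unfolding pq by (cases c; cases d; simp; presburger)
qed

lemma cle_iff:
  assumes "valid_cint (i, c)" "valid_cint (j, d)"
  shows "cle (i, c) (j, d) \<longleftrightarrow> 4 * i + colour_offset d \<le> 4 * j + colour_offset c"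
  using colour_offset_le[OF assms(1)] colour_offset_le[OF assms(2)]
  unfolding cle_def crank_eq[OF assms(1)] crank_eq[OF assms(2)] by linarith

text \<open>Integer indices: a negative size or weight gives the empty set, as in dcount,
  so removing a part never needs a side condition.\<close>
definition partitions :: "int \<Rightarrow> int \<Rightarrow> int \<Rightarrow> cint list set" where
  "partitions u v n = {ps. admissible ps \<and> int (psize ps) = n
                          \<and> int (weight_u ps) = u \<and> int (weight_v ps) = v}"

definition partitions_le :: "cint \<Rightarrow> int \<Rightarrow> int \<Rightarrow> int \<Rightarrow> cint list set" where
  "partitions_le K u v n = {ps \<in> partitions u v n. ps = [] \<or> cle (hd ps) K}"

definition partitions_hd :: "cint \<Rightarrow> int \<Rightarrow> int \<Rightarrow> int \<Rightarrow> cint list set" where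
  "partitions_hd K u v n = {ps \<in> partitions u v n. ps \<noteq> [] \<and> hd ps = K}"

definition partitions_after :: "cint \<Rightarrow> int \<Rightarrow> int \<Rightarrow> int \<Rightarrow> cint list set" where
  "partitions_after K u v n = {ps \<in> partitions u v n. ps = [] \<or> may_follow K (hd ps)}"

lemma dcount_eq_card: "dcount K u v n = card (partitions_le K u v n)"
proof (cases "u < 0 \<or> v < 0 \<or> n < 0")
  case True
  then have "partitions_le K u v n = {}"
    unfolding partitions_le_def partitions_def by auto
  with True show ?thesis unfolding dcount_def by simp
qed (simp add: dcount_def partitions_le_def partitions_def)

lemma allowed_part_fst_pos: "allowed_part p \<Longrightarrow> fst p \<ge> 1"
  by (simp add: allowed_part_def valid_cint_def Let_def)

lemma finite_partitions: "finite (partitions u v n)"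
proof (rule finite_subset)
  show "partitions u v n \<subseteq> {ps. set ps \<subseteq> {0..nat n} \<times> UNIV \<and> length ps \<le> nat n}"
  proof (rule subsetI, rule CollectI, rule conjI)
    fix ps assume ps: "ps \<in> partitions u v n"
    then have "\<forall>p\<in>set ps. fst p \<ge> 1" "psize ps = nat n"
      using allowed_part_fst_pos by (auto simp: partitions_def admissible_iff)
    moreover have "length ps \<le> psize ps" if "\<forall>p\<in>set ps. fst p \<ge> 1"
      using that by (induction ps) (auto simp: psize_def)
    moreover have "fst p \<le> psize ps" if "p \<in> set ps" for p
      using that by (induction ps) (auto simp: psize_def)
    ultimately show "set ps \<subseteq> {0..nat n} \<times> UNIV" "length ps \<le> nat n"
      by (auto simp: mem_Times_iff)
  qed
  have "finite (UNIV :: colour set)"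
  proof -
    have "(UNIV :: colour set) = {Ca, Cb, Cab, Ca2, Cb2}" by (auto intro: colour.exhaust)
    then show ?thesis by (metis finite.emptyI finite_insert)
  qed
  then show "finite {ps. set ps \<subseteq> {0..nat n} \<times> (UNIV :: colour set) \<and> length ps \<le> nat n}"
    by (intro finite_lists_length_le) auto
qed

lemma allowed_part_hd: "ps \<in> partitions u v n \<Longrightarrow> ps \<noteq> [] \<Longrightarrow> allowed_part (hd ps)"
  by (cases ps) (auto simp: partitions_def admissible_Cons)

lemma card_partitions_hd:
  assumes "allowed_part K"
  shows "card (partitions_hd K u v n)
           = card (partitions_after K (u - int (weight_u [K])) (v - int (weight_v [K])) (n - int (fst K)))"
proof -
  have "partitions_hd K u v n
          = Cons K ` partitions_after K (u - int (weight_u [K])) (v - int (weight_v [K])) (n - int (fst K))"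
    using assms
    by (auto simp: partitions_hd_def partitions_after_def partitions_def admissible_Cons
                   psize_def weight_u_def weight_v_def neq_Nil_conv image_iff)
  then show ?thesis by (simp add: card_image)
qed

lemma card_partitions_le_step:
  assumes "allowed_part K" "crank K = Suc (crank K')"
  shows "card (partitions_le K u v n) = card (partitions_le K' u v n) + card (partitions_hd K u v n)"
proof -
  have "cle (hd ps) K \<longleftrightarrow> cle (hd ps) K' \<or> hd ps = K" if "ps \<in> partitions u v n" "ps \<noteq> []" for ps
    using assms crank_inj[of "hd ps" K] allowed_part_hd[OF that]
    unfolding cle_def allowed_part_def by (auto simp: le_Suc_eq)
  then have "partitions_le K u v n = partitions_le K' u v n \<union> partitions_hd K u v n"
    unfolding partitions_le_def partitions_hd_def by blast
  moreover have "partitions_le K' u v n \<inter> partitions_hd K u v n = {}"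
    using assms(2) unfolding partitions_le_def partitions_hd_def cle_def by auto
  ultimately show ?thesis
    using finite_partitions by (simp add: card_Un_disjoint partitions_le_def partitions_hd_def)
qed

lemma partitions_after_eq_le:
  assumes "\<And>m. allowed_part m \<Longrightarrow> may_follow K m \<longleftrightarrow> cle m K'"
  shows "partitions_after K u v n = partitions_le K' u v n"
  using assms allowed_part_hd unfolding partitions_after_def partitions_le_def by blast

lemma card_partitions_after:
  assumes "\<And>m. allowed_part m \<Longrightarrow> may_follow K m \<longleftrightarrow> cle m K' \<or> m = K''" "\<not> cle K'' K'"
  shows "card (partitions_after K u v n) = card (partitions_le K' u v n) + card (partitions_hd K'' u v n)"
proof -
  have "partitions_after K u v n = partitions_le K' u v n \<union> partitions_hd K'' u v n"
    using assms(1) allowed_part_hd unfolding partitions_after_def partitions_le_def partitions_hd_def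
    by blast
  moreover have "partitions_le K' u v n \<inter> partitions_hd K'' u v n = {}"
    using assms(2) unfolding partitions_le_def partitions_hd_def by auto
  ultimately show ?thesis
    using finite_partitions by (simp add: card_Un_disjoint partitions_le_def partitions_hd_def)
qed

lemma dcount_Suc_crank:
  assumes "allowed_part K" "crank K = Suc (crank K')"
    and "\<And>m. allowed_part m \<Longrightarrow> may_follow K m \<longleftrightarrow> cle m L"
  shows "dcount K u v n = dcount K' u v n
           + dcount L (u - int (weight_u [K])) (v - int (weight_v [K])) (n - int (fst K))"
  by (simp add: dcount_eq_card card_partitions_le_step[OF assms(1,2)] card_partitions_hd[OF assms(1)]
    partitions_after_eq_le[OF assms(3)])

lemma dcount_Suc_crank_chain:
  assumes "allowed_part K" "crank K = Suc (crank K')"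
    and "\<And>m. allowed_part m \<Longrightarrow> may_follow K m \<longleftrightarrow> cle m L \<or> m = M" "\<not> cle M L"
    and "allowed_part M" "\<And>m. allowed_part m \<Longrightarrow> may_follow M m \<longleftrightarrow> cle m L'"
  shows "dcount K u v n = dcount K' u v n
           + dcount L (u - int (weight_u [K])) (v - int (weight_v [K])) (n - int (fst K))
           + dcount L' (u - int (weight_u [K]) - int (weight_u [M]))
                       (v - int (weight_v [K]) - int (weight_v [M])) (n - int (fst K) - int (fst M))"
  by (simp add: dcount_eq_card card_partitions_le_step[OF assms(1,2)] card_partitions_hd[OF assms(1)]
    card_partitions_after[OF assms(3,4)] card_partitions_hd[OF assms(5)] partitions_after_eq_le[OF assms(6)])

lemma may_follow_iff:
  assumes "k \<ge> 1" "allowed_part m"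
  shows "may_follow (2*k+1, Cab) m \<longleftrightarrow> cle m (2*k-1, Ca)"
    and "may_follow (2*k+1, Ca) m \<longleftrightarrow> cle m (2*k, Cab)"
    and "may_follow (2*k+1, Cb2) m \<longleftrightarrow> cle m (2*k-1, Ca)"
    and "may_follow (2*k+1, Cb) m \<longleftrightarrow> cle m (2*k, Ca)"
    and "may_follow (2*k+2, Cab) m \<longleftrightarrow> cle m (2*k, Ca) \<or> m = (2*k, Cb)"
    and "may_follow (2*k+2, Ca) m \<longleftrightarrow> cle m (2*k, Ca) \<or> m = (2*k, Cb)"
    and "may_follow (2*k+3, Ca2) m \<longleftrightarrow> cle m (2*k, Ca) \<or> m = (2*k, Cb)"
    and "may_follow (2*k+2, Cb) m \<longleftrightarrow> cle m (2*k+1, Ca)"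
    and "may_follow (2*k, Cb) m \<longleftrightarrow> cle m (2*k-1, Ca)"
  using assms unfolding allowed_part_def
  by (cases m, cases "snd m";
      simp add: cle_iff may_follow_def mindiff_def valid_cint_def; (linarith | presburger))+

lemma crank_Suc:
  assumes "k \<ge> 1"
  shows "crank (2*k+1, Cab) = Suc (crank (2*k, Cb))"
    and "crank (2*k+1, Ca) = Suc (crank (2*k+1, Cab))"
    and "crank (2*k+1, Cb2) = Suc (crank (2*k+1, Ca))"
    and "crank (2*k+1, Cb) = Suc (crank (2*k+1, Cb2))"
    and "crank (2*k+2, Cab) = Suc (crank (2*k+1, Cb))"
    and "crank (2*k+2, Ca) = Suc (crank (2*k+2, Cab))"
    and "crank (2*k+3, Ca2) = Suc (crank (2*k+2, Ca))"
    and "crank (2*k+2, Cb) = Suc (crank (2*k+3, Ca2))"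
  using assms by (simp_all add: crank_eq valid_cint_def del: crank.simps)

lemma allowed_parts:
  assumes "k \<ge> 1"
  shows "allowed_part (2*k+1, Cab)" "allowed_part (2*k+1, Ca)" "allowed_part (2*k+1, Cb2)"
    "allowed_part (2*k+1, Cb)" "allowed_part (2*k+2, Cab)" "allowed_part (2*k+2, Ca)"
    "allowed_part (2*k+3, Ca2)" "allowed_part (2*k+2, Cb)" "allowed_part (2*k, Cb)"
  using assms by (simp_all add: allowed_part_def valid_cint_def)

theorem lemma3p1:
  fixes u v k n :: nat
  assumes "k \<ge> 1" and "n \<ge> 1"
  shows
   "(dcount (2*k+1, Cab) (int u) (int v) (int n) = dcount (2*k, Cb) (int u) (int v) (int n)
        + dcount (2*k-1, Ca) (int u - 1) (int v - 1) (int n - 2*int k - 1)) \<and>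
    (dcount (2*k+1, Ca) (int u) (int v) (int n) = dcount (2*k+1, Cab) (int u) (int v) (int n)
        + dcount (2*k, Cab) (int u - 1) (int v) (int n - 2*int k - 1)) \<and>
    (dcount (2*k+1, Cb2) (int u) (int v) (int n) = dcount (2*k+1, Ca) (int u) (int v) (int n)
        + dcount (2*k-1, Ca) (int u) (int v - 2) (int n - 2*int k - 1)) \<and>
    (dcount (2*k+1, Cb) (int u) (int v) (int n) = dcount (2*k+1, Cb2) (int u) (int v) (int n)
        + dcount (2*k, Ca) (int u) (int v - 1) (int n - 2*int k - 1)) \<and>
    (dcount (2*k+2, Cab) (int u) (int v) (int n) = dcount (2*k+1, Cb) (int u) (int v) (int n)
        + dcount (2*k, Ca) (int u - 1) (int v - 1) (int n - 2*int k - 2)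
        + dcount (2*k-1, Ca) (int u - 1) (int v - 2) (int n - 4*int k - 2)) \<and>
    (dcount (2*k+2, Ca) (int u) (int v) (int n) = dcount (2*k+2, Cab) (int u) (int v) (int n)
        + dcount (2*k, Ca) (int u - 1) (int v) (int n - 2*int k - 2)
        + dcount (2*k-1, Ca) (int u - 1) (int v - 1) (int n - 4*int k - 2)) \<and>
    (dcount (2*k+3, Ca2) (int u) (int v) (int n) = dcount (2*k+2, Ca) (int u) (int v) (int n)
        + dcount (2*k, Ca) (int u - 2) (int v) (int n - 2*int k - 3)
        + dcount (2*k-1, Ca) (int u - 2) (int v - 1) (int n - 4*int k - 3)) \<and>
    (dcount (2*k+2, Cb) (int u) (int v) (int n) = dcount (2*k+3, Ca2) (int u) (int v) (int n)
        + dcount (2*k+1, Ca) (int u) (int v - 1) (int n - 2*int k - 2))"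
proof -
  note allowed = allowed_parts[OF assms(1)] and rank = crank_Suc[OF assms(1)]
    and follows = may_follow_iff[OF assms(1)]
  have not_le: "\<not> cle (2*k, Cb) (2*k, Ca)"
    by (simp add: cle_def)
  note recurrences = dcount_Suc_crank[OF allowed(1) rank(1) follows(1)]
    dcount_Suc_crank[OF allowed(2) rank(2) follows(2)]
    dcount_Suc_crank[OF allowed(3) rank(3) follows(3)]
    dcount_Suc_crank[OF allowed(4) rank(4) follows(4)]
    dcount_Suc_crank[OF allowed(8) rank(8) follows(8)]
  note chain_recurrences = dcount_Suc_crank_chain[OF allowed(5) rank(5) follows(5) not_le allowed(9) follows(9)]
    dcount_Suc_crank_chain[OF allowed(6) rank(6) follows(6) not_le allowed(9) follows(9)]
    dcount_Suc_crank_chain[OF allowed(7) rank(7) follows(7) not_le allowed(9) follows(9)]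
  show ?thesis
    using recurrences chain_recurrences by (simp add: weight_u_def weight_v_def algebra_simps)
qed

end
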